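(* Let $(L^n_{\mathbb{R}})^{+}$ be the set of all real symmetric matrices $A\in M_n(\mathbb{R})$ with nonnegative spectrum such that the Schur map $S_A\colon M_n(\mathbb{R})\to M_n(\mathbb{R})$, $S_A(B)=A\circ B$, is nonzero and multiplicative. Then $(L^n_{\mathbb{R}})^{+}$ (a group under the Schur product) has cardinality $2^{n-1}$.
   Context: $A\circ B=(a_{ij}b_{ij})$ is the entrywise product; multiplicative means $S_A(BC)=S_A(B)S_A(C)$ for all $B,C\in M_n(\mathbb{R})$. *)

theory Defs
  imports "HOL-Analysis.Analysis"
begin

definition schur_prod :: "real^'n^'n \<Rightarrow> real^'n^'n \<Rightarrow> real^'n^'n" where
  "schur_prod A B = (\<chi> i j. A $ i $ j * B $ i $ j)"

definition symmetric_mat :: "real^'n^'n \<Rightarrow> bool" where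
  "symmetric_mat A \<longleftrightarrow> transpose A = A"

text \<open>Eigenvalue of a real matrix (real eigenvalues; for symmetric matrices the
  whole spectrum is real).\<close>
definition is_eigenvalue :: "real^'n^'n \<Rightarrow> real \<Rightarrow> bool" where
  "is_eigenvalue A c \<longleftrightarrow> (\<exists>x. x \<noteq> 0 \<and> A *v x = c *\<^sub>R x)"

definition nonneg_spectrum :: "real^'n^'n \<Rightarrow> bool" where
  "nonneg_spectrum A \<longleftrightarrow> (\<forall>c. is_eigenvalue A c \<longrightarrow> c \<ge> 0)"

definition schur_multiplicative :: "real^'n^'n \<Rightarrow> bool" where
  "schur_multiplicative A \<longleftrightarrow>
     (\<forall>B C. schur_prod A (B ** C) = schur_prod A B ** schur_prod A C)"

definition L_plus :: "(real^'n^'n) set" where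
  "L_plus = {A. symmetric_mat A \<and> nonneg_spectrum A \<and>
                (\<lambda>B. schur_prod A B) \<noteq> (\<lambda>B. 0) \<and> schur_multiplicative A}"

end

theory Submission
  imports Defs
begin

text \<open>A Schur map \<open>S\<^sub>A\<close> is multiplicative exactly when \<open>a\<^sub>i\<^sub>j = a\<^sub>i\<^sub>k a\<^sub>k\<^sub>j\<close> for all
  \<open>i, j, k\<close> (test on products of matrix units). Such an \<open>A \<noteq> 0\<close> has unit diagonal, and if it is
  also symmetric then \<open>a\<^sub>i\<^sub>j = a\<^sub>i\<^sub>k a\<^sub>j\<^sub>k\<close> with \<open>a\<^sub>i\<^sub>j\<^sup>2 = 1\<close>, i.e. \<open>A = s s\<^sup>T\<close> for a sign vector \<open>s\<close>
  (any column of \<open>A\<close>). Conversely every \<open>s s\<^sup>T\<close> with \<open>s \<in> {\<plusminus>1}\<^sup>n\<close> lies in the set, having the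
  eigenvalues \<open>0\<close> and \<open>n\<close> only. Since \<open>s s\<^sup>T = (-s)(-s)\<^sup>T\<close>, normalising \<open>s\<^sub>i\<^sub>0 = 1\<close> gives a
  bijection with the subsets of the remaining \<open>n - 1\<close> indices where \<open>s\<close> is negative.\<close>

lemma symmetric_mat_iff: "symmetric_mat A \<longleftrightarrow> (\<forall>i j. A $ i $ j = A $ j $ i)"
  by (auto simp: symmetric_mat_def transpose_def vec_eq_iff)

lemma schur_map_nonzero_iff:
  "(\<lambda>B. schur_prod A B) \<noteq> (\<lambda>B. 0) \<longleftrightarrow> A \<noteq> 0"
proof
  assume "(\<lambda>B. schur_prod A B) \<noteq> (\<lambda>B. 0)"
  then show "A \<noteq> 0" by (auto simp: schur_prod_def vec_eq_iff)
next
  assume "A \<noteq> 0"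
  then have "schur_prod A A \<noteq> 0" by (auto simp: schur_prod_def vec_eq_iff)
  then show "(\<lambda>B. schur_prod A B) \<noteq> (\<lambda>B. 0)" by metis
qed

lemma schur_multiplicative_iff:
  fixes A :: "real^'n^'n"
  shows "schur_multiplicative A \<longleftrightarrow> (\<forall>i j k. A $ i $ j = A $ i $ k * A $ k $ j)"
proof
  assume mult: "schur_multiplicative A"
  show "\<forall>i j k. A $ i $ j = A $ i $ k * A $ k $ j"
  proof (intro allI)
    fix i j k :: 'n
    define E :: "'n \<Rightarrow> 'n \<Rightarrow> real^'n^'n"
      where "E p q = (\<chi> a b. if a = p \<and> b = q then 1 else 0)" for p q
    have "schur_prod A (E i k ** E k j) $ i $ j = A $ i $ j"
      by (simp add: schur_prod_def matrix_matrix_mult_def E_def if_distrib cong: if_cong)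
    moreover have "(schur_prod A (E i k) ** schur_prod A (E k j)) $ i $ j = A $ i $ k * A $ k $ j"
      by (simp add: schur_prod_def matrix_matrix_mult_def E_def if_distrib cong: if_cong)
    ultimately show "A $ i $ j = A $ i $ k * A $ k $ j"
      using mult by (simp add: schur_multiplicative_def)
  qed
next
  assume trans: "\<forall>i j k. A $ i $ j = A $ i $ k * A $ k $ j"
  have entry: "A $ i $ j * (B $ i $ k * C $ k $ j) = A $ i $ k * B $ i $ k * (A $ k $ j * C $ k $ j)"
    for i j k and B C :: "real^'n^'n"
    by (subst trans[rule_format, of i j k]) (simp add: ac_simps)
  show "schur_multiplicative A"
    unfolding schur_multiplicative_def schur_prod_def matrix_matrix_mult_def
    by (auto simp: vec_eq_iff sum_distrib_left intro!: sum.cong entry)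
qed

lemma transitive_entries_diag_eq_one:
  fixes A :: "'a::idom^'n^'n"
  assumes trans: "\<And>i j k. A $ i $ j = A $ i $ k * A $ k $ j" and "A \<noteq> 0"
  shows "A $ k $ k = 1"
proof -
  obtain p q where pq: "A $ p $ q \<noteq> 0"
    using \<open>A \<noteq> 0\<close> by (auto simp: vec_eq_iff)
  have "A $ p $ p = 1"
    using trans[of p q p] pq by simp
  then have "A $ p $ k \<noteq> 0"
    using trans[of p p k] by auto
  then show ?thesis
    using trans[of p k k] by simp
qed

definition outer_self :: "real^'n \<Rightarrow> real^'n^'n" where
  "outer_self v = (\<chi> i j. v $ i * v $ j)"

definition sign_vec :: "'n set \<Rightarrow> real^'n" where
  "sign_vec S = (\<chi> i. if i \<in> S then -1 else 1)"

lemma outer_self_mult_vec: "outer_self v *v x = (v \<bullet> x) *\<^sub>R v"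
  by (simp add: vec_eq_iff matrix_vector_mult_def outer_self_def inner_vec_def
      sum_distrib_left algebra_simps)

lemma symmetric_outer_self: "symmetric_mat (outer_self v)"
  by (simp add: symmetric_mat_iff outer_self_def)

lemma nonneg_spectrum_outer_self: "nonneg_spectrum (outer_self v)"
  unfolding nonneg_spectrum_def is_eigenvalue_def
proof (intro allI impI)
  fix c
  assume "\<exists>x. x \<noteq> 0 \<and> outer_self v *v x = c *\<^sub>R x"
  then obtain x where "x \<noteq> 0" and eig: "(v \<bullet> x) *\<^sub>R v = c *\<^sub>R x"
    by (auto simp: outer_self_mult_vec)
  show "c \<ge> 0"
  proof (cases "v \<bullet> x = 0")
    case True
    then show ?thesis using eig \<open>x \<noteq> 0\<close> by simp
  next
    case False
    have "(v \<bullet> x) * (v \<bullet> v) = c * (v \<bullet> x)"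
      using arg_cong[OF eig, of "inner v"] by (simp add: mult.commute)
    then have "c = v \<bullet> v" using False by simp
    then show ?thesis by simp
  qed
qed

lemma schur_multiplicative_outer_self:
  assumes "\<And>i. v $ i * v $ i = 1"
  shows "schur_multiplicative (outer_self v)"
  unfolding schur_multiplicative_iff
proof (intro allI)
  fix i j k
  have "v $ i * v $ j = v $ i * (v $ k * v $ k) * v $ j"
    using assms by simp
  then show "outer_self v $ i $ j = outer_self v $ i $ k * outer_self v $ k $ j"
    by (simp add: outer_self_def ac_simps)
qed

lemma outer_sign_vec_in_L_plus: "outer_self (sign_vec S) \<in> L_plus"
proof -
  have "outer_self (sign_vec S) \<noteq> 0"
    by (auto simp: outer_self_def vec_eq_iff sign_vec_def)
  moreover have "schur_multiplicative (outer_self (sign_vec S))"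
    by (rule schur_multiplicative_outer_self) (simp add: sign_vec_def)
  ultimately show ?thesis
    by (simp add: L_plus_def schur_map_nonzero_iff symmetric_outer_self nonneg_spectrum_outer_self)
qed

text \<open>The sign vector is read off the column \<open>i\<^sub>0\<close>, normalised by \<open>a\<^sub>i\<^sub>0\<^sub>i\<^sub>0 = 1\<close>.\<close>
lemma L_plus_eq_outer_sign_vec:
  fixes A :: "real^'n^'n"
  assumes "A \<in> L_plus"
  shows "\<exists>S \<in> Pow (UNIV - {i0}). A = outer_self (sign_vec S)"
proof -
  have sym: "A $ i $ j = A $ j $ i" for i j
    using assms by (simp add: L_plus_def symmetric_mat_iff)
  have trans: "A $ i $ j = A $ i $ k * A $ k $ j" for i j k
    using assms by (simp add: L_plus_def schur_multiplicative_iff)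
  have diag: "A $ k $ k = 1" for k
    using assms trans by (intro transitive_entries_diag_eq_one) (auto simp: L_plus_def schur_map_nonzero_iff)
  define S where "S = {i. A $ i $ i0 = -1}"
  have "A $ i $ i0 * A $ i $ i0 = 1" for i
    using trans[of i i i0] diag[of i] sym[of i0 i] by simp
  then have column: "A $ i $ i0 = sign_vec S $ i" for i
    by (simp add: sign_vec_def S_def) (metis mult_cancel_left1 square_eq_1_iff)
  have "A $ i $ j = sign_vec S $ i * sign_vec S $ j" for i j
  proof -
    have "A $ i $ j = A $ i $ i0 * A $ j $ i0"
      using trans[of i j i0] sym[of i0 j] by simp
    also have "\<dots> = sign_vec S $ i * sign_vec S $ j"
      by (simp only: column)
    finally show ?thesis .
  qed
  then have "A = outer_self (sign_vec S)"
    by (simp add: vec_eq_iff outer_self_def)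
  moreover have "S \<in> Pow (UNIV - {i0})"
    using diag[of i0] by (auto simp: S_def)
  ultimately show ?thesis by blast
qed

lemma inj_on_outer_sign_vec:
  "inj_on (\<lambda>S. outer_self (sign_vec S) :: real^'n^'n) (Pow (UNIV - {i0}))"
proof
  fix S T :: "'n set"
  assume "S \<in> Pow (UNIV - {i0})" "T \<in> Pow (UNIV - {i0})"
    and eq: "outer_self (sign_vec S) = outer_self (sign_vec T)"
  then have "i0 \<notin> S" "i0 \<notin> T" by auto
  have "outer_self (sign_vec S) $ i $ i0 = outer_self (sign_vec T) $ i $ i0" for i
    using eq by simp
  then have same_sign: "sign_vec S $ i = sign_vec T $ i" for i
    using \<open>i0 \<notin> S\<close> \<open>i0 \<notin> T\<close> by (simp add: outer_self_def sign_vec_def)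
  have "i \<in> S \<longleftrightarrow> i \<in> T" for i
    using same_sign[of i] by (auto simp: sign_vec_def split: if_splits)
  then show "S = T" by blast
qed

theorem theorem3p4:
  shows "card (L_plus :: (real^'n^'n) set) = 2 ^ (CARD('n) - 1)"
proof -
  fix i0 :: 'n
  have "(L_plus :: (real^'n^'n) set) = (\<lambda>S. outer_self (sign_vec S)) ` Pow (UNIV - {i0})"
    using L_plus_eq_outer_sign_vec outer_sign_vec_in_L_plus by blast
  then have "card (L_plus :: (real^'n^'n) set) = card (Pow (UNIV - {i0} :: 'n set))"
    using inj_on_outer_sign_vec card_image by metis
  also have "\<dots> = 2 ^ (CARD('n) - 1)"
    by (simp add: card_Pow)
  finally show ?thesis .
qed

end
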